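(* In the nonatomic base station association game with cost densities $c_{lj}(\mathbf{m})=g_{lj}c(m_j)$, every Nash equilibrium is Pareto efficient; that is, if $\mathbf{m}$ is a Nash equilibrium there is no congestion profile $\mathbf{m}'$ such that $c_{lk}(\mathbf{m}')\le c_{lj}(\mathbf{m})$ for every class $l$ and all BSs $j,k$ with $m_{lj}>0$ and $m'_{lk}>0$, with strict inequality for at least one such triple $(l,j,k)$.
   Context: Nonatomic model: classes $\mathcal{L}=\{1,\dots,L\}$ of nonatomic mobiles, class $l$ having total mass $M_l>0$, target SINR density $\gamma_l>0$ and power gain $h_{lj}>0$ to BS $j\in\mathcal{N}=\{1,\dots,N\}$; noise power $\sigma^2>0$. A congestion profile is $\mathbf{m}=(m_{lj})$ with $m_{lj}\ge0$, $\sum_j m_{lj}=M_l$. Set $m_j=\sum_l\gamma_l m_{lj}$, $g_{lj}=\gamma_l\sigma^2/h_{lj}$, and $c(z)=1/(1-z)$ for $z<1$, $c(z)=\infty$ for $z\ge1$; $c_{lj}(\mathbf{m})=g_{lj}c(m_j)$. $\mathbf{m}$ is a Nash equilibrium if for all $l,j$, $m_{lj}>0$ implies $c_{lj}(\mathbf{m})\le c_{lk}(\mathbf{m})$ for all $k$. Standing feasibility assumption: $\sum_l\gamma_l M_l<N$. *)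

theory Defs
  imports Complex_Main "HOL-Library.Extended_Real"
begin

text \<open>Classes are indexed by {1..L}, base stations by {1..N}.
  A profile is a function m :: nat => nat => real, m l j = mass of class l at BS j.\<close>

definition congestion_profile ::
  "nat \<Rightarrow> nat \<Rightarrow> (nat \<Rightarrow> real) \<Rightarrow> (nat \<Rightarrow> nat \<Rightarrow> real) \<Rightarrow> bool" where
  "congestion_profile L N M m \<longleftrightarrow>
     (\<forall>l\<in>{1..L}. (\<forall>j\<in>{1..N}. m l j \<ge> 0) \<and> (\<Sum>j\<in>{1..N}. m l j) = M l)"

definition load :: "nat \<Rightarrow> (nat \<Rightarrow> real) \<Rightarrow> (nat \<Rightarrow> nat \<Rightarrow> real) \<Rightarrow> nat \<Rightarrow> real" where
  "load L \<gamma> m j = (\<Sum>l\<in>{1..L}. \<gamma> l * m l j)"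

definition cfun :: "real \<Rightarrow> ereal" where
  "cfun z = (if z < 1 then ereal (1 / (1 - z)) else \<infinity>)"

definition gcoef :: "(nat \<Rightarrow> real) \<Rightarrow> real \<Rightarrow> (nat \<Rightarrow> nat \<Rightarrow> real) \<Rightarrow> nat \<Rightarrow> nat \<Rightarrow> real" where
  "gcoef \<gamma> \<sigma>2 h l j = \<gamma> l * \<sigma>2 / h l j"

definition cost ::
  "nat \<Rightarrow> (nat \<Rightarrow> real) \<Rightarrow> real \<Rightarrow> (nat \<Rightarrow> nat \<Rightarrow> real) \<Rightarrow> (nat \<Rightarrow> nat \<Rightarrow> real) \<Rightarrow> nat \<Rightarrow> nat \<Rightarrow> ereal" where
  "cost L \<gamma> \<sigma>2 h m l j = ereal (gcoef \<gamma> \<sigma>2 h l j) * cfun (load L \<gamma> m j)"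

definition nash_equilibrium ::
  "nat \<Rightarrow> nat \<Rightarrow> (nat \<Rightarrow> real) \<Rightarrow> (nat \<Rightarrow> real) \<Rightarrow> real \<Rightarrow> (nat \<Rightarrow> nat \<Rightarrow> real) \<Rightarrow> (nat \<Rightarrow> nat \<Rightarrow> real) \<Rightarrow> bool" where
  "nash_equilibrium L N M \<gamma> \<sigma>2 h m \<longleftrightarrow>
     congestion_profile L N M m \<and>
     (\<forall>l\<in>{1..L}. \<forall>j\<in>{1..N}. m l j > 0 \<longrightarrow>
        (\<forall>k\<in>{1..N}. cost L \<gamma> \<sigma>2 h m l j \<le> cost L \<gamma> \<sigma>2 h m l k))"

definition pareto_dominates ::
  "nat \<Rightarrow> nat \<Rightarrow> (nat \<Rightarrow> real) \<Rightarrow> real \<Rightarrow> (nat \<Rightarrow> nat \<Rightarrow> real) \<Rightarrow> (nat \<Rightarrow> nat \<Rightarrow> real) \<Rightarrow> (nat \<Rightarrow> nat \<Rightarrow> real) \<Rightarrow> bool" where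
  "pareto_dominates L N \<gamma> \<sigma>2 h m' m \<longleftrightarrow>
     (\<forall>l\<in>{1..L}. \<forall>j\<in>{1..N}. \<forall>k\<in>{1..N}. m l j > 0 \<and> m' l k > 0 \<longrightarrow>
        cost L \<gamma> \<sigma>2 h m' l k \<le> cost L \<gamma> \<sigma>2 h m l j) \<and>
     (\<exists>l\<in>{1..L}. \<exists>j\<in>{1..N}. \<exists>k\<in>{1..N}. m l j > 0 \<and> m' l k > 0 \<and>
        cost L \<gamma> \<sigma>2 h m' l k < cost L \<gamma> \<sigma>2 h m l j)"

end

theory Submission
  imports Defs
begin

text \<open>At an equilibrium no base station is saturated: a class at a saturated station would
  face infinite cost everywhere, so every station would be saturated, contradicting feasibility.
  Now let m' Pareto-dominate an equilibrium m. A class present at station k under m' pays there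
  at most its equilibrium cost, which by the equilibrium condition is at most its cost at k
  under m; as c is strictly increasing below 1, the load of k under m' is at most that under m.
  Both profiles carry the same total load, so all loads coincide, hence so do all costs, and
  no strict improvement is possible.\<close>

lemma sum_pos_imp_ex_pos:
  fixes f :: "'a \<Rightarrow> 'b::{ordered_comm_monoid_add, linorder}"
  assumes "0 < sum f A"
  shows "\<exists>x\<in>A. 0 < f x"
  using sum_nonpos[of A f] assms by (meson not_le)

lemma cfun_eq_infinity_iff: "cfun z = \<infinity> \<longleftrightarrow> 1 \<le> z"
  by (simp add: cfun_def)

lemma cfun_le_cfun_iff:
  assumes "w < 1"
  shows "cfun z \<le> cfun w \<longleftrightarrow> z \<le> w"
proof (cases "z < 1")
  case True
  then show ?thesis
    using assms by (simp add: cfun_def divide_le_eq_1 frac_le divide_inverse_commute)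
next
  case False
  then show ?thesis
    using assms by (simp add: cfun_def)
qed

lemma cost_eq_infinity_iff:
  "0 < gcoef \<gamma> \<sigma>2 h l j \<Longrightarrow> cost L \<gamma> \<sigma>2 h m l j = \<infinity> \<longleftrightarrow> 1 \<le> load L \<gamma> m j"
  by (simp add: cost_def ereal_mult_eq_PInfty cfun_eq_infinity_iff)

lemma cost_le_cost_iff:
  assumes "0 < gcoef \<gamma> \<sigma>2 h l k" and "load L \<gamma> m k < 1"
  shows "cost L \<gamma> \<sigma>2 h m' l k \<le> cost L \<gamma> \<sigma>2 h m l k \<longleftrightarrow> load L \<gamma> m' k \<le> load L \<gamma> m k"
  using assms by (simp add: cost_def ereal_mult_le_mult_iff cfun_le_cfun_iff)

lemma sum_load_eq_total_mass:
  assumes "congestion_profile L N M m"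
  shows "(\<Sum>j\<in>{1..N}. load L \<gamma> m j) = (\<Sum>l\<in>{1..L}. \<gamma> l * M l)"
proof -
  have "(\<Sum>j\<in>{1..N}. load L \<gamma> m j) = (\<Sum>l\<in>{1..L}. \<gamma> l * (\<Sum>j\<in>{1..N}. m l j))"
    unfolding load_def by (subst sum.swap) (simp add: sum_distrib_left)
  also have "\<dots> = (\<Sum>l\<in>{1..L}. \<gamma> l * M l)"
    using assms unfolding congestion_profile_def by simp
  finally show ?thesis .
qed

lemma load_nonneg:
  assumes "congestion_profile L N M m" "\<forall>l\<in>{1..L}. 0 \<le> \<gamma> l" "j \<in> {1..N}"
  shows "0 \<le> load L \<gamma> m j"
  using assms unfolding load_def congestion_profile_def by (intro sum_nonneg) simp

lemma ex_class_at_if_load_pos: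
  assumes "\<forall>l\<in>{1..L}. 0 \<le> \<gamma> l" "0 < load L \<gamma> m j"
  shows "\<exists>l\<in>{1..L}. 0 < m l j"
proof -
  obtain l where "l \<in> {1..L}" "0 < \<gamma> l * m l j"
    using sum_pos_imp_ex_pos assms(2) unfolding load_def by blast
  with assms(1) show ?thesis by (auto simp: zero_less_mult_iff dest: bspec[of _ _ l])
qed

lemma ex_station_of_if_mass_pos:
  assumes "congestion_profile L N M m" "l \<in> {1..L}" "0 < M l"
  shows "\<exists>j\<in>{1..N}. 0 < m l j"
  using assms sum_pos_imp_ex_pos[of "m l" "{1..N}"] unfolding congestion_profile_def by auto

locale association_game =
  fixes L N :: nat and M \<gamma> :: "nat \<Rightarrow> real" and h :: "nat \<Rightarrow> nat \<Rightarrow> real" and \<sigma>2 :: real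
  assumes M_pos: "\<forall>l\<in>{1..L}. M l > 0"
    and \<gamma>_pos: "\<forall>l\<in>{1..L}. \<gamma> l > 0"
    and h_pos: "\<forall>l\<in>{1..L}. \<forall>j\<in>{1..N}. h l j > 0"
    and \<sigma>_pos: "\<sigma>2 > 0"
    and feasible: "(\<Sum>l\<in>{1..L}. \<gamma> l * M l) < real N"
begin

abbreviation "c \<equiv> cost L \<gamma> \<sigma>2 h"

lemma \<gamma>_nonneg: "\<forall>l\<in>{1..L}. 0 \<le> \<gamma> l"
  using \<gamma>_pos by auto

lemma gcoef_pos: "l \<in> {1..L} \<Longrightarrow> j \<in> {1..N} \<Longrightarrow> 0 < gcoef \<gamma> \<sigma>2 h l j"
  unfolding gcoef_def using \<gamma>_pos h_pos \<sigma>_pos by auto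

lemma nash_equilibrium_load_less_one:
  assumes NE: "nash_equilibrium L N M \<gamma> \<sigma>2 h m" and k: "k \<in> {1..N}"
  shows "load L \<gamma> m k < 1"
proof (rule ccontr)
  assume saturated: "\<not> load L \<gamma> m k < 1"
  then obtain l where l: "l \<in> {1..L}" "0 < m l k"
    using ex_class_at_if_load_pos[OF \<gamma>_nonneg, of m k] by auto
  have "c m l k = \<infinity>"
    using saturated cost_eq_infinity_iff[OF gcoef_pos[OF l(1) k]] by simp
  moreover have "c m l k \<le> c m l i" if "i \<in> {1..N}" for i
    using NE l k that unfolding nash_equilibrium_def by blast
  ultimately have "c m l i = \<infinity>" if "i \<in> {1..N}" for i
    using that by (metis PInfty_neq_ereal(1) ereal_infty_less_eq(1))
  then have "1 \<le> load L \<gamma> m i" if "i \<in> {1..N}" for i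
    using cost_eq_infinity_iff[OF gcoef_pos[OF l(1) that]] that by blast
  then have "real N \<le> (\<Sum>i\<in>{1..N}. load L \<gamma> m i)"
    using sum_mono[of "{1..N}" "\<lambda>_. 1::real"] by simp
  moreover have "congestion_profile L N M m"
    using NE unfolding nash_equilibrium_def by blast
  ultimately show False
    using feasible sum_load_eq_total_mass by fastforce
qed

lemma pareto_dominating_load_le:
  assumes NE: "nash_equilibrium L N M \<gamma> \<sigma>2 h m"
    and dom: "pareto_dominates L N \<gamma> \<sigma>2 h m' m"
    and k: "k \<in> {1..N}"
  shows "load L \<gamma> m' k \<le> load L \<gamma> m k"
proof (cases "0 < load L \<gamma> m' k")
  case False
  with NE k show ?thesis
    unfolding nash_equilibrium_def using load_nonneg[OF _ \<gamma>_nonneg k] by force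
next
  case True
  then obtain l where l: "l \<in> {1..L}" "0 < m' l k"
    using ex_class_at_if_load_pos[OF \<gamma>_nonneg] by blast
  obtain j where j: "j \<in> {1..N}" "0 < m l j"
    using NE ex_station_of_if_mass_pos[OF _ l(1)] M_pos l(1)
    unfolding nash_equilibrium_def by blast
  have "c m' l k \<le> c m l j"
    using dom l j k unfolding pareto_dominates_def by blast
  also have "\<dots> \<le> c m l k"
    using NE l(1) j k unfolding nash_equilibrium_def by blast
  finally show ?thesis
    using cost_le_cost_iff[OF gcoef_pos[OF l(1) k] nash_equilibrium_load_less_one[OF NE k]] by simp
qed

lemma pareto_dominating_load_eq:
  assumes NE: "nash_equilibrium L N M \<gamma> \<sigma>2 h m"
    and cp': "congestion_profile L N M m'" and dom: "pareto_dominates L N \<gamma> \<sigma>2 h m' m"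
    and k: "k \<in> {1..N}"
  shows "load L \<gamma> m' k = load L \<gamma> m k"
proof (rule sum_mono_inv[OF _ _ k])
  show "(\<Sum>i\<in>{1..N}. load L \<gamma> m' i) = (\<Sum>i\<in>{1..N}. load L \<gamma> m i)"
    using NE cp' unfolding nash_equilibrium_def by (metis sum_load_eq_total_mass)
qed (use pareto_dominating_load_le[OF NE dom] in auto)

theorem nash_equilibrium_pareto_efficient:
  assumes NE: "nash_equilibrium L N M \<gamma> \<sigma>2 h m"
  shows "\<not> (\<exists>m'. congestion_profile L N M m' \<and> pareto_dominates L N \<gamma> \<sigma>2 h m' m)"
proof
  assume "\<exists>m'. congestion_profile L N M m' \<and> pareto_dominates L N \<gamma> \<sigma>2 h m' m"
  then obtain m' where cp': "congestion_profile L N M m'"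
    and dom: "pareto_dominates L N \<gamma> \<sigma>2 h m' m" by blast
  then obtain l j k where l: "l \<in> {1..L}" and j: "j \<in> {1..N}" and k: "k \<in> {1..N}"
    and "0 < m l j" and improved: "c m' l k < c m l j"
    unfolding pareto_dominates_def by blast
  then have "c m l j \<le> c m l k"
    using NE unfolding nash_equilibrium_def by blast
  also have "\<dots> = c m' l k"
    unfolding cost_def using pareto_dominating_load_eq[OF NE cp' dom k] by simp
  finally show False
    using improved by simp
qed

end

theorem proposition10:
  fixes L N :: nat and M \<gamma> :: "nat \<Rightarrow> real" and h :: "nat \<Rightarrow> nat \<Rightarrow> real"
    and \<sigma>2 :: real and m :: "nat \<Rightarrow> nat \<Rightarrow> real"
  assumes M_pos: "\<forall>l\<in>{1..L}. M l > 0"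
    and \<gamma>_pos: "\<forall>l\<in>{1..L}. \<gamma> l > 0"
    and h_pos: "\<forall>l\<in>{1..L}. \<forall>j\<in>{1..N}. h l j > 0"
    and \<sigma>_pos: "\<sigma>2 > 0"
    and feasible: "(\<Sum>l\<in>{1..L}. \<gamma> l * M l) < real N"
    and NE: "nash_equilibrium L N M \<gamma> \<sigma>2 h m"
  shows "\<not> (\<exists>m'. congestion_profile L N M m' \<and> pareto_dominates L N \<gamma> \<sigma>2 h m' m)"
proof -
  interpret association_game L N M \<gamma> h \<sigma>2
    using assms by unfold_locales
  show ?thesis
    using nash_equilibrium_pareto_efficient[OF NE] .
qed

end
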